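(* Let $G$ be a connected $(P_6,C_5)$-free graph, and suppose $G$ contains a chromatic cutset $S$ that is also a minimal separator. Let $(S_1,\dots,S_t)$ be a partition of $S$ into 1-chromatic sets that are pairwise complete to each other, and let $G'$ be obtained from $G$ by contracting each $S_i$ into a new vertex $s_i$ (i.e., replacing $S_i$ by a vertex $s_i$ whose neighborhood is exactly the set of vertices outside $S_i$ having a neighbor in $S_i$). Then $G'$ is $(P_6,C_5)$-free.
   Context: Graphs are finite and simple. A graph is $(P_6,C_5)$-free if it has no induced 6-vertex path and no induced 5-cycle. A set $S\subseteq V(G)$ is 1-chromatic if $S$ is an independent set and in every 4-coloring of $G$ all vertices of $S$ receive the same color. A set $S$ is a cutset if $G$ is connected and $G-S$ is disconnected. A cutset $S$ is a chromatic cutset if it admits a partition into 1-chromatic sets that are pairwise complete to each other (every vertex of one part adjacent to every vertex of another). A cutset $S$ is a minimal separator if there are two distinct connected components $K,K'$ of $G-S$ such that every vertex of $S$ has a neighbor in $K$ and a neighbor in $K'$. *)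

theory Defs
  imports Main
begin

definition graph :: "'a set \<Rightarrow> ('a \<Rightarrow> 'a \<Rightarrow> bool) \<Rightarrow> bool" where
  "graph V E \<longleftrightarrow> finite V \<and> (\<forall>x y. E x y \<longrightarrow> x \<in> V \<and> y \<in> V \<and> x \<noteq> y \<and> E y x)"

definition induced_P6 :: "'a set \<Rightarrow> ('a \<Rightarrow> 'a \<Rightarrow> bool) \<Rightarrow> 'a list \<Rightarrow> bool" where
  "induced_P6 V E p \<longleftrightarrow> length p = 6 \<and> distinct p \<and> set p \<subseteq> V \<and>
     (\<forall>i<6. \<forall>j<6. E (p!i) (p!j) \<longleftrightarrow> (i = j + 1 \<or> j = i + 1))"

definition induced_C5 :: "'a set \<Rightarrow> ('a \<Rightarrow> 'a \<Rightarrow> bool) \<Rightarrow> 'a list \<Rightarrow> bool" where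
  "induced_C5 V E c \<longleftrightarrow> length c = 5 \<and> distinct c \<and> set c \<subseteq> V \<and>
     (\<forall>i<5. \<forall>j<5. E (c!i) (c!j) \<longleftrightarrow> (j = (i + 1) mod 5 \<or> i = (j + 1) mod 5))"

definition P6_C5_free :: "'a set \<Rightarrow> ('a \<Rightarrow> 'a \<Rightarrow> bool) \<Rightarrow> bool" where
  "P6_C5_free V E \<longleftrightarrow> (\<nexists>p. induced_P6 V E p) \<and> (\<nexists>c. induced_C5 V E c)"

definition reach_in :: "('a \<Rightarrow> 'a \<Rightarrow> bool) \<Rightarrow> 'a set \<Rightarrow> 'a \<Rightarrow> 'a \<Rightarrow> bool" where
  "reach_in E A x y \<longleftrightarrow> x \<in> A \<and> y \<in> A \<and> (\<lambda>u v. E u v \<and> u \<in> A \<and> v \<in> A)\<^sup>*\<^sup>* x y"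

definition connected_set :: "('a \<Rightarrow> 'a \<Rightarrow> bool) \<Rightarrow> 'a set \<Rightarrow> bool" where
  "connected_set E A \<longleftrightarrow> (\<forall>x\<in>A. \<forall>y\<in>A. reach_in E A x y)"

definition connected_graph :: "'a set \<Rightarrow> ('a \<Rightarrow> 'a \<Rightarrow> bool) \<Rightarrow> bool" where
  "connected_graph V E \<longleftrightarrow> V \<noteq> {} \<and> connected_set E V"

definition component :: "('a \<Rightarrow> 'a \<Rightarrow> bool) \<Rightarrow> 'a set \<Rightarrow> 'a set \<Rightarrow> bool" where
  "component E A K \<longleftrightarrow> (\<exists>x\<in>A. K = {y. reach_in E A x y})"

definition independent :: "('a \<Rightarrow> 'a \<Rightarrow> bool) \<Rightarrow> 'a set \<Rightarrow> bool" where
  "independent E S \<longleftrightarrow> (\<forall>x\<in>S. \<forall>y\<in>S. \<not> E x y)"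

definition four_coloring :: "'a set \<Rightarrow> ('a \<Rightarrow> 'a \<Rightarrow> bool) \<Rightarrow> ('a \<Rightarrow> nat) \<Rightarrow> bool" where
  "four_coloring V E c \<longleftrightarrow> (\<forall>x\<in>V. c x < 4) \<and> (\<forall>x\<in>V. \<forall>y\<in>V. E x y \<longrightarrow> c x \<noteq> c y)"

definition one_chromatic :: "'a set \<Rightarrow> ('a \<Rightarrow> 'a \<Rightarrow> bool) \<Rightarrow> 'a set \<Rightarrow> bool" where
  "one_chromatic V E S \<longleftrightarrow> S \<subseteq> V \<and> independent E S \<and>
     (\<forall>c. four_coloring V E c \<longrightarrow> (\<forall>x\<in>S. \<forall>y\<in>S. c x = c y))"

definition complete_to :: "('a \<Rightarrow> 'a \<Rightarrow> bool) \<Rightarrow> 'a set \<Rightarrow> 'a set \<Rightarrow> bool" where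
  "complete_to E X Y \<longleftrightarrow> (\<forall>x\<in>X. \<forall>y\<in>Y. E x y)"

definition cutset :: "'a set \<Rightarrow> ('a \<Rightarrow> 'a \<Rightarrow> bool) \<Rightarrow> 'a set \<Rightarrow> bool" where
  "cutset V E S \<longleftrightarrow> S \<subseteq> V \<and> connected_graph V E \<and> \<not> connected_set E (V - S)"

definition chromatic_partition :: "'a set \<Rightarrow> ('a \<Rightarrow> 'a \<Rightarrow> bool) \<Rightarrow> 'a set \<Rightarrow> 'a set set \<Rightarrow> bool" where
  "chromatic_partition V E S P \<longleftrightarrow>
     (\<forall>X\<in>P. X \<noteq> {}) \<and> \<Union>P = S \<and> (\<forall>X\<in>P. \<forall>Y\<in>P. X \<noteq> Y \<longrightarrow> X \<inter> Y = {}) \<and>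
     (\<forall>X\<in>P. one_chromatic V E X) \<and> (\<forall>X\<in>P. \<forall>Y\<in>P. X \<noteq> Y \<longrightarrow> complete_to E X Y)"

definition chromatic_cutset :: "'a set \<Rightarrow> ('a \<Rightarrow> 'a \<Rightarrow> bool) \<Rightarrow> 'a set \<Rightarrow> bool" where
  "chromatic_cutset V E S \<longleftrightarrow> cutset V E S \<and> (\<exists>P. chromatic_partition V E S P)"

definition minimal_separator :: "'a set \<Rightarrow> ('a \<Rightarrow> 'a \<Rightarrow> bool) \<Rightarrow> 'a set \<Rightarrow> bool" where
  "minimal_separator V E S \<longleftrightarrow> cutset V E S \<and>
     (\<exists>K K'. component E (V - S) K \<and> component E (V - S) K' \<and> K \<noteq> K' \<and>
        (\<forall>s\<in>S. (\<exists>k\<in>K. E s k) \<and> (\<exists>k\<in>K'. E s k)))"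

text \<open>Contraction of each part X of P into a new vertex (Inr X); other vertices are Inl v.\<close>
definition contract_V :: "'a set \<Rightarrow> 'a set \<Rightarrow> 'a set set \<Rightarrow> ('a + 'a set) set" where
  "contract_V V S P = Inl ` (V - S) \<union> Inr ` P"

fun contract_E :: "'a set \<Rightarrow> ('a \<Rightarrow> 'a \<Rightarrow> bool) \<Rightarrow> 'a set \<Rightarrow> 'a set set \<Rightarrow>
    ('a + 'a set) \<Rightarrow> ('a + 'a set) \<Rightarrow> bool" where
  "contract_E V E S P (Inl u) (Inl v) \<longleftrightarrow> u \<in> V - S \<and> v \<in> V - S \<and> E u v"
| "contract_E V E S P (Inl u) (Inr Y) \<longleftrightarrow> u \<in> V - S \<and> Y \<in> P \<and> (\<exists>y\<in>Y. E u y)"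
| "contract_E V E S P (Inr X) (Inl v) \<longleftrightarrow> v \<in> V - S \<and> X \<in> P \<and> (\<exists>x\<in>X. E x v)"
| "contract_E V E S P (Inr X) (Inr Y) \<longleftrightarrow> X \<in> P \<and> Y \<in> P \<and> X \<noteq> Y \<and> (\<exists>x\<in>X. \<exists>y\<in>Y. E x y)"

end

theory Submission
  imports Defs
begin

text \<open>Let \<open>H\<close> be an induced \<open>P\<^sub>6\<close> or \<open>C\<^sub>5\<close> of the contracted graph. If every contracted
  vertex \<open>s\<^sub>X\<close> of \<open>H\<close> has a vertex \<open>x \<in> X\<close> adjacent to all neighbours of \<open>s\<^sub>X\<close> in \<open>H\<close>
  outside \<open>S\<close>, replacing each \<open>s\<^sub>X\<close> by such an \<open>x\<close> gives an induced copy of \<open>H\<close> in \<open>G\<close>,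
  because the parts are independent and pairwise complete. Otherwise some \<open>s\<^sub>X\<close> has exactly
  two neighbours \<open>a, b\<close> in \<open>H\<close>, both outside \<open>S\<close>, and there are \<open>x\<^sub>1, x\<^sub>2 \<in> X\<close> with
  \<open>x\<^sub>1\<close> seeing \<open>a\<close> but not \<open>b\<close> and \<open>x\<^sub>2\<close> seeing \<open>b\<close> but not \<open>a\<close>. On a \<open>C\<^sub>5\<close> \<open>s\<^sub>X-a-c-d-b\<close>
  this makes \<open>x\<^sub>1-a-c-d-b-x\<^sub>2\<close> an induced \<open>P\<^sub>6\<close> of \<open>G\<close>. On a \<open>P\<^sub>6\<close> the path continues as
  \<open>b-c-d\<close> in \<open>G - S\<close>; since \<open>S\<close> is a minimal separator, \<open>x\<^sub>1\<close> and \<open>x\<^sub>2\<close> both have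
  neighbours in a component of \<open>G - S\<close> avoiding \<open>b\<close>, and a path there from \<open>x\<^sub>2\<close> towards
  \<open>x\<^sub>1\<close> extends \<open>d-c-b-x\<^sub>2\<close> to an induced \<open>P\<^sub>6\<close> of \<open>G\<close>.\<close>

lemma all_less_six: "(\<forall>i<(6::nat). P i) \<longleftrightarrow> P 0 \<and> P 1 \<and> P 2 \<and> P 3 \<and> P 4 \<and> P 5"
  by (simp add: eval_nat_numeral All_less_Suc conj_ac)

lemma all_less_five: "(\<forall>i<(5::nat). P i) \<longleftrightarrow> P 0 \<and> P 1 \<and> P 2 \<and> P 3 \<and> P 4"
  by (simp add: eval_nat_numeral All_less_Suc conj_ac)

lemma induced_P6_iff:
  "induced_P6 V E [a0,a1,a2,a3,a4,a5] \<longleftrightarrow> distinct [a0,a1,a2,a3,a4,a5] \<and> set [a0,a1,a2,a3,a4,a5] \<subseteq> V \<and>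
   \<not> E a0 a0 \<and> E a0 a1 \<and> \<not> E a0 a2 \<and> \<not> E a0 a3 \<and> \<not> E a0 a4 \<and> \<not> E a0 a5 \<and>
   E a1 a0 \<and> \<not> E a1 a1 \<and> E a1 a2 \<and> \<not> E a1 a3 \<and> \<not> E a1 a4 \<and> \<not> E a1 a5 \<and>
   \<not> E a2 a0 \<and> E a2 a1 \<and> \<not> E a2 a2 \<and> E a2 a3 \<and> \<not> E a2 a4 \<and> \<not> E a2 a5 \<and>
   \<not> E a3 a0 \<and> \<not> E a3 a1 \<and> E a3 a2 \<and> \<not> E a3 a3 \<and> E a3 a4 \<and> \<not> E a3 a5 \<and>
   \<not> E a4 a0 \<and> \<not> E a4 a1 \<and> \<not> E a4 a2 \<and> E a4 a3 \<and> \<not> E a4 a4 \<and> E a4 a5 \<and>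
   \<not> E a5 a0 \<and> \<not> E a5 a1 \<and> \<not> E a5 a2 \<and> \<not> E a5 a3 \<and> E a5 a4 \<and> \<not> E a5 a5"
  unfolding induced_P6_def all_less_six by simp

lemma induced_C5_iff:
  "induced_C5 V E [a0,a1,a2,a3,a4] \<longleftrightarrow> distinct [a0,a1,a2,a3,a4] \<and> set [a0,a1,a2,a3,a4] \<subseteq> V \<and>
   \<not> E a0 a0 \<and> E a0 a1 \<and> \<not> E a0 a2 \<and> \<not> E a0 a3 \<and> E a0 a4 \<and>
   E a1 a0 \<and> \<not> E a1 a1 \<and> E a1 a2 \<and> \<not> E a1 a3 \<and> \<not> E a1 a4 \<and>
   \<not> E a2 a0 \<and> E a2 a1 \<and> \<not> E a2 a2 \<and> E a2 a3 \<and> \<not> E a2 a4 \<and>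
   \<not> E a3 a0 \<and> \<not> E a3 a1 \<and> E a3 a2 \<and> \<not> E a3 a3 \<and> E a3 a4 \<and>
   E a4 a0 \<and> \<not> E a4 a1 \<and> \<not> E a4 a2 \<and> E a4 a3 \<and> \<not> E a4 a4"
  unfolding induced_C5_def all_less_five by simp

lemma induced_P6_rev: "induced_P6 V E [a,b,c,d,e,f] \<Longrightarrow> induced_P6 V E [f,e,d,c,b,a]"
  unfolding induced_P6_iff by auto

lemma induced_C5_rotate1: "induced_C5 V E [a,b,c,d,e] \<Longrightarrow> induced_C5 V E [b,c,d,e,a]"
  unfolding induced_C5_iff by auto

lemma induced_P6_shape:
  assumes "induced_P6 V E H"
  obtains a b c d e f where "H = [a,b,c,d,e,f]"
proof -
  have "length H = 6"
    using assms unfolding induced_P6_def by blast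
  then show ?thesis
    using that by (auto simp: numeral_eq_Suc length_Suc_conv)
qed

lemma induced_C5_shape:
  assumes "induced_C5 V E H"
  obtains a b c d e where "H = [a,b,c,d,e]"
proof -
  have "length H = 5"
    using assms unfolding induced_C5_def by blast
  then show ?thesis
    using that by (auto simp: numeral_eq_Suc length_Suc_conv)
qed

lemma induced_P6_map:
  assumes "induced_P6 V' E' H" "f ` set H \<subseteq> V" "inj_on f (set H)"
    "\<forall>x\<in>set H. \<forall>y\<in>set H. E (f x) (f y) \<longleftrightarrow> E' x y"
  shows "induced_P6 V E (map f H)"
  using assms unfolding induced_P6_def by (auto simp: distinct_map)

lemma induced_C5_map:
  assumes "induced_C5 V' E' H" "f ` set H \<subseteq> V" "inj_on f (set H)"
    "\<forall>x\<in>set H. \<forall>y\<in>set H. E (f x) (f y) \<longleftrightarrow> E' x y"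
  shows "induced_C5 V E (map f H)"
  using assms unfolding induced_C5_def by (auto simp: distinct_map)

lemma graph_sym: "graph V E \<Longrightarrow> E x y \<Longrightarrow> E y x"
  and graph_irrefl: "graph V E \<Longrightarrow> \<not> E x x"
  unfolding graph_def by blast+

lemma graph_sym_iff: "graph V E \<Longrightarrow> E x y \<longleftrightarrow> E y x"
  using graph_sym[of V E x y] graph_sym[of V E y x] by blast

lemma induced_P6I:
  assumes g: "graph V E" and "{a, b, c, d, e, f} \<subseteq> V"
    and "E a b" "E b c" "E c d" "E d e" "E e f"
    and "\<not> E a c" "\<not> E a d" "\<not> E a e" "\<not> E a f" "\<not> E b d" "\<not> E b e" "\<not> E b f"
      "\<not> E c e" "\<not> E c f" "\<not> E d f"
    and "a \<noteq> c" "a \<noteq> d" "a \<noteq> e" "a \<noteq> f" "b \<noteq> d" "b \<noteq> e" "b \<noteq> f" "c \<noteq> e"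
      "c \<noteq> f" "d \<noteq> f"
  shows "induced_P6 V E [a,b,c,d,e,f]"
proof -
  note s = graph_sym[OF g]
  have n: "\<not> E y x" if "\<not> E x y" for x y
    using that s by blast
  note F = assms(3-17) s[OF assms(3)] s[OF assms(4)] s[OF assms(5)] s[OF assms(6)] s[OF assms(7)]
    n[OF assms(8)] n[OF assms(9)] n[OF assms(10)] n[OF assms(11)] n[OF assms(12)] n[OF assms(13)]
    n[OF assms(14)] n[OF assms(15)] n[OF assms(16)] n[OF assms(17)] graph_irrefl[OF g]
  have "distinct [a,b,c,d,e,f]"
    using assms(3-7,18-) graph_irrefl[OF g] by auto
  then show ?thesis
    unfolding induced_P6_iff using assms(2) F by simp
qed

lemma rtranclp_boundary_edge:
  assumes "R\<^sup>*\<^sup>* x y" "Q x" "\<not> Q y"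
  shows "\<exists>u w. R\<^sup>*\<^sup>* x u \<and> R u w \<and> Q u \<and> \<not> Q w"
  using assms by (induction rule: rtranclp_induct) (auto intro: rtranclp.rtrancl_into_rtrancl)

lemma reach_in_trans: "reach_in E A x y \<Longrightarrow> reach_in E A y z \<Longrightarrow> reach_in E A x z"
  unfolding reach_in_def by auto

lemma reach_in_edge: "x \<in> A \<Longrightarrow> y \<in> A \<Longrightarrow> E x y \<Longrightarrow> reach_in E A x y"
  unfolding reach_in_def by auto

lemma reach_in_refl: "x \<in> A \<Longrightarrow> reach_in E A x x"
  unfolding reach_in_def by auto

lemma reach_in_sym:
  assumes "graph V E" "reach_in E A x y" shows "reach_in E A y x"
proof -
  have "symp (\<lambda>u v. E u v \<and> u \<in> A \<and> v \<in> A)"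
    using graph_sym[OF assms(1)] by (auto intro: sympI)
  then show ?thesis
    using assms(2) symp_rtranclp unfolding reach_in_def by (metis sympD)
qed

lemma reach_in_class_eq:
  assumes "graph V E" "reach_in E A k b"
  shows "{y. reach_in E A k y} = {y. reach_in E A b y}"
proof (intro Collect_cong iffI)
  fix y
  show "reach_in E A b y" if "reach_in E A k y"
    using reach_in_trans[OF reach_in_sym[OF assms] that] .
  show "reach_in E A k y" if "reach_in E A b y"
    using reach_in_trans[OF assms(2) that] .
qed

lemma reach_in_separated:
  assumes g: "graph V E" and "reach_in E A k z" "reach_in E A b y" "\<not> reach_in E A k b"
  shows "z \<noteq> y \<and> \<not> E z y \<and> \<not> E y z"
proof -
  have "\<not> reach_in E A k y"
    using assms(3,4) reach_in_sym[OF g] reach_in_trans by metis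
  moreover have "z \<in> A" "y \<in> A" using assms(2,3) unfolding reach_in_def by auto
  ultimately show ?thesis
    using assms(2) reach_in_edge[of z A y] graph_sym[OF g] reach_in_trans by metis
qed


lemma minimal_separator_far_component:
  assumes g: "graph V E" and "minimal_separator V E S" and b: "b \<in> V - S"
  shows "\<exists>k. \<not> reach_in E (V - S) k b \<and> (\<forall>s\<in>S. \<exists>u. reach_in E (V - S) k u \<and> E s u)"
proof -
  obtain K K' where KK: "component E (V - S) K" "component E (V - S) K'" "K \<noteq> K'"
    and nbrs: "\<forall>s\<in>S. (\<exists>u\<in>K. E s u) \<and> (\<exists>u\<in>K'. E s u)"
    using assms(2) unfolding minimal_separator_def by blast
  obtain k k' where k: "K = {y. reach_in E (V - S) k y}" and k': "K' = {y. reach_in E (V - S) k' y}"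
    using KK(1,2) unfolding component_def by blast
  have "\<not> reach_in E (V - S) k b \<or> \<not> reach_in E (V - S) k' b"
    using KK(3) reach_in_class_eq[OF g, of "V - S" k b] reach_in_class_eq[OF g, of "V - S" k' b]
    unfolding k k' by auto
  then show ?thesis
    using nbrs k k' by blast
qed

lemma induced_P6_via_far_component:
  assumes g: "graph V E" and "S \<subseteq> V"
    and bcd: "b \<in> V - S" "c \<in> V - S" "d \<in> V - S" "E b c" "E c d" "\<not> E b d" "b \<noteq> d"
    and x: "x1 \<in> S" "x2 \<in> S" "E x2 b" "\<not> E x1 b" "\<not> E x1 c" "\<not> E x1 d" "\<not> E x2 c" "\<not> E x2 d"
      "\<not> E x1 x2"
    and k: "\<not> reach_in E (V - S) k b"
    and u1: "reach_in E (V - S) k u1" "E x1 u1" and u2: "reach_in E (V - S) k u2" "E x2 u2"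
  shows "\<exists>p. induced_P6 V E p"
proof -
  have far: "z \<in> V - S \<and> z \<noteq> y \<and> \<not> E z y \<and> \<not> E y z"
    if "reach_in E (V - S) k z" "y \<in> {b, c, d}" for z y
  proof -
    have "reach_in E (V - S) b c" "reach_in E (V - S) c d"
      using bcd by (auto intro: reach_in_edge)
    then have "reach_in E (V - S) b y"
      using that(2) bcd(1) by (auto intro: reach_in_refl reach_in_trans)
    moreover have "z \<in> V - S"
      using that(1) unfolding reach_in_def by blast
    ultimately show ?thesis
      using reach_in_separated[OF g that(1) _ k] by blast
  qed
  note facts = bcd x \<open>S \<subseteq> V\<close> graph_irrefl[OF g]
  \<comment> \<open>Either \<open>u1\<close> closes the path at once, or the last neighbour of \<open>x2\<close> on a walk
    from \<open>u2\<close> to \<open>u1\<close> is followed by a non-neighbour.\<close>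
  show ?thesis
  proof (cases "E x2 u1")
    case True
    have "induced_P6 V E [d, c, b, x2, u1, x1]"
      using far[OF u1(1)] facts True u1(2) by (intro induced_P6I[OF g]) (auto dest: graph_sym[OF g])
    then show ?thesis ..
  next
    case False
    have "(\<lambda>u v. E u v \<and> u \<in> V - S \<and> v \<in> V - S)\<^sup>*\<^sup>* u2 u1"
      using reach_in_trans[OF reach_in_sym[OF g u2(1)] u1(1)] unfolding reach_in_def by blast
    from rtranclp_boundary_edge[OF this, of "E x2"] obtain u w
      where "(\<lambda>u v. E u v \<and> u \<in> V - S \<and> v \<in> V - S)\<^sup>*\<^sup>* u2 u"
        and uw: "E u w" "u \<in> V - S" "w \<in> V - S" "E x2 u" "\<not> E x2 w"
      using u2(2) False by blast
    then have "reach_in E (V - S) u2 u"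
      using uw(2) u2(1) unfolding reach_in_def by blast
    then have u: "reach_in E (V - S) k u"
      using u2(1) by (rule reach_in_trans[rotated])
    have w: "reach_in E (V - S) k w"
      using reach_in_trans[OF u reach_in_edge] uw by blast
    have "induced_P6 V E [d, c, b, x2, u, w]"
      using far[OF u] far[OF w] facts uw by (intro induced_P6I[OF g]) (auto dest: graph_sym[OF g])
    then show ?thesis ..
  qed
qed

locale chromatic_contraction =
  fixes V :: "'a set" and E :: "'a \<Rightarrow> 'a \<Rightarrow> bool" and S :: "'a set" and P :: "'a set set"
  assumes graph: "graph V E"
    and minimal_separator: "minimal_separator V E S"
    and partition: "chromatic_partition V E S P"
begin

abbreviation "V' \<equiv> contract_V V S P"
abbreviation "E' \<equiv> contract_E V E S P"

lemma S_subset: "S \<subseteq> V"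
  using minimal_separator unfolding minimal_separator_def cutset_def by blast

lemma part_nonempty: "X \<in> P \<Longrightarrow> X \<noteq> {}"
  using partition unfolding chromatic_partition_def by blast

lemma part_subset: "X \<in> P \<Longrightarrow> X \<subseteq> S"
  using partition unfolding chromatic_partition_def by blast

lemma part_disjoint: "X \<in> P \<Longrightarrow> Y \<in> P \<Longrightarrow> X \<noteq> Y \<Longrightarrow> x \<in> X \<Longrightarrow> x \<notin> Y"
  using partition unfolding chromatic_partition_def by blast

lemma part_complete: "X \<in> P \<Longrightarrow> Y \<in> P \<Longrightarrow> X \<noteq> Y \<Longrightarrow> x \<in> X \<Longrightarrow> y \<in> Y \<Longrightarrow> E x y"
  using partition unfolding chromatic_partition_def complete_to_def by blast

lemma part_independent: "X \<in> P \<Longrightarrow> x \<in> X \<Longrightarrow> y \<in> X \<Longrightarrow> \<not> E x y"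
  using partition unfolding chromatic_partition_def one_chromatic_def independent_def by blast

lemma contract_V_iff [simp]: "Inl v \<in> V' \<longleftrightarrow> v \<in> V - S" "Inr X \<in> V' \<longleftrightarrow> X \<in> P"
  unfolding contract_V_def by auto

lemma contract_E_Inr: "E' (Inr X) (Inr Y) \<longleftrightarrow> X \<in> P \<and> Y \<in> P \<and> X \<noteq> Y"
proof (cases "X \<in> P \<and> Y \<in> P")
  case True
  obtain x y where "x \<in> X" "y \<in> Y"
    using part_nonempty True by blast
  then show ?thesis
    using True part_complete[of X Y x y] by auto
qed auto

lemma contract_E_sym: "E' z w \<longleftrightarrow> E' w z"
proof (cases z; cases w)
  fix X Y assume "z = Inr X" "w = Inr Y"
  then show ?thesis
    using contract_E_Inr[of X Y] contract_E_Inr[of Y X] by blast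
qed (auto simp: graph_sym_iff[OF graph])

lemma contract_nonneighbour:
  assumes "z \<in> V'" "z \<noteq> Inr X" "\<not> E' (Inr X) z" "X \<in> P"
  shows "\<exists>c. z = Inl c \<and> c \<in> V - S \<and> (\<forall>x\<in>X. \<not> E x c)"
proof (cases z)
  case (Inr Y)
  then show ?thesis
    using assms contract_E_Inr[of X Y] by auto
qed (use assms in auto)

text \<open>\<open>x\<close> can replace the contracted vertex \<open>Inr X\<close> in the induced subgraph on \<open>A\<close>:
  adjacency to the other contracted vertices is automatic, since the parts are complete to each other.\<close>
definition represents :: "('a + 'a set) set \<Rightarrow> 'a set \<Rightarrow> 'a \<Rightarrow> bool" where
  "represents A X x \<longleftrightarrow> x \<in> X \<and> (\<forall>v. Inl v \<in> A \<and> E' (Inr X) (Inl v) \<longrightarrow> E x v)"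

definition lift :: "('a + 'a set) set \<Rightarrow> 'a + 'a set \<Rightarrow> 'a" where
  "lift A z = (case z of Inl v \<Rightarrow> v | Inr X \<Rightarrow> SOME x. represents A X x)"

lemma lift_Inl [simp]: "lift A (Inl v) = v"
  unfolding lift_def by simp

context
  fixes A assumes A_sub: "A \<subseteq> V'" and A_represented: "\<forall>X. Inr X \<in> A \<longrightarrow> (\<exists>x. represents A X x)"
begin

lemma Inl_in_A: "Inl v \<in> A \<Longrightarrow> v \<in> V - S"
  using A_sub by auto

lemma lift_Inr:
  assumes "Inr X \<in> A"
  shows "X \<in> P" "represents A X (lift A (Inr X))" "lift A (Inr X) \<in> X" "lift A (Inr X) \<in> S"
proof -
  show X: "X \<in> P"
    using assms A_sub by auto
  show rep: "represents A X (lift A (Inr X))"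
    unfolding lift_def sum.case using someI_ex A_represented assms by metis
  show "lift A (Inr X) \<in> X"
    using rep unfolding represents_def by blast
  then show "lift A (Inr X) \<in> S"
    using part_subset[OF X] by blast
qed

lemma lift_in_V: "lift A ` A \<subseteq> V"
proof
  fix u assume "u \<in> lift A ` A"
  then obtain z where "z \<in> A" "u = lift A z"
    by blast
  then show "u \<in> V"
    using Inl_in_A lift_Inr S_subset by (cases z) auto
qed

lemma inj_on_lift: "inj_on (lift A) A"
proof (rule inj_onI)
  fix z w assume zw: "z \<in> A" "w \<in> A" "lift A z = lift A w"
  show "z = w"
  proof (cases z; cases w)
    fix X Y assume "z = Inr X" "w = Inr Y"
    then show ?thesis
      using zw lift_Inr part_disjoint by metis
  qed (use zw Inl_in_A lift_Inr in force)+
qed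

lemma lift_adjacent_Inl_Inr:
  assumes "Inl v \<in> A" "Inr Y \<in> A"
  shows "E v (lift A (Inr Y)) \<longleftrightarrow> E' (Inl v) (Inr Y)"
proof
  assume "E v (lift A (Inr Y))"
  then show "E' (Inl v) (Inr Y)"
    using assms Inl_in_A lift_Inr by auto
next
  assume "E' (Inl v) (Inr Y)"
  then have "E (lift A (Inr Y)) v"
    using lift_Inr(2)[OF assms(2)] contract_E_sym assms(1) unfolding represents_def by blast
  then show "E v (lift A (Inr Y))"
    using graph_sym[OF graph] by blast
qed

lemma lift_adjacent:
  assumes zw: "z \<in> A" "w \<in> A"
  shows "E (lift A z) (lift A w) \<longleftrightarrow> E' z w"
proof (cases z; cases w)
  fix u v assume "z = Inl u" "w = Inl v"
  then show ?thesis
    using zw Inl_in_A by simp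
next
  fix u Y assume "z = Inl u" "w = Inr Y"
  then show ?thesis
    using zw lift_adjacent_Inl_Inr by simp
next
  fix X v assume "z = Inr X" "w = Inl v"
  then show ?thesis
    using zw lift_adjacent_Inl_Inr lift_Inl graph_sym_iff[OF graph] contract_E_sym by metis
next
  fix X Y assume "z = Inr X" "w = Inr Y"
  then show ?thesis
    using zw lift_Inr part_complete contract_E_Inr graph_irrefl[OF graph] by metis
qed

end

lemma unrepresented_neighbours:
  assumes X: "X \<in> P" and unrep: "\<nexists>x. represents A X x"
    and nbrs: "\<forall>z\<in>A. E' (Inr X) z \<longrightarrow> z = p \<or> z = q"
  shows "\<exists>a b. p = Inl a \<and> q = Inl b \<and> (\<exists>x\<in>X. E x a) \<and> (\<exists>x\<in>X. E x b) \<and>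
    \<not> (\<exists>x\<in>X. E x a \<and> E x b)"
proof -
  define N where "N = {v. Inl v \<in> A \<and> E' (Inr X) (Inl v)}"
  have miss: "\<exists>v\<in>N. \<not> E x v" if "x \<in> X" for x
    using unrep that unfolding represents_def N_def by blast
  have seen: "\<exists>x\<in>X. E x v" if "v \<in> N" for v
    using that unfolding N_def by auto
  have N_pq: "Inl v = p \<or> Inl v = q" if "v \<in> N" for v
    using that nbrs unfolding N_def by blast
  obtain a where a: "a \<in> N"
    using part_nonempty[OF X] miss by blast
  then obtain xa where xa: "xa \<in> X" "E xa a"
    using seen by blast
  then obtain b where b: "b \<in> N" "\<not> E xa b"
    using miss by blast
  have "a \<noteq> b"
    using xa b by blast
  then have pq: "p = Inl a \<and> q = Inl b \<or> p = Inl b \<and> q = Inl a"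
    using N_pq[OF a] N_pq[OF b(1)] by auto
  then have "v = a \<or> v = b" if "v \<in> N" for v
    using N_pq[OF that] by auto
  then have "\<not> (\<exists>x\<in>X. E x a \<and> E x b)"
    using miss by blast
  then show ?thesis
    using pq seen a b by blast
qed

lemma induced_P6_of_unrepresented_path:
  assumes X: "X \<in> P" and unrep: "\<nexists>x. represents A X x"
    and nbrs: "\<forall>z\<in>A. E' (Inr X) z \<longrightarrow> z = p \<or> z = q"
    and cd: "c \<in> V'" "d \<in> V'" "c \<noteq> Inr X" "d \<noteq> Inr X" "\<not> E' (Inr X) c" "\<not> E' (Inr X) d"
    and path: "E' q c" "E' c d" "\<not> E' q d"
  shows "\<exists>p. induced_P6 V E p"
proof -
  obtain a b where ab: "q = Inl b" "\<exists>x\<in>X. E x a" "\<exists>x\<in>X. E x b" "\<not> (\<exists>x\<in>X. E x a \<and> E x b)"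
    using unrepresented_neighbours[OF X unrep nbrs] by blast
  obtain x1 x2 where x: "x1 \<in> X" "x2 \<in> X" "E x2 b" "\<not> E x1 b"
    using ab by blast
  obtain c' d' where c': "c = Inl c'" "c' \<in> V - S" "\<forall>x\<in>X. \<not> E x c'"
    and d': "d = Inl d'" "d' \<in> V - S" "\<forall>x\<in>X. \<not> E x d'"
    using contract_nonneighbour[OF cd(1,3,5) X] contract_nonneighbour[OF cd(2,4,6) X] by blast
  have b: "b \<in> V - S" "E b c'" "E c' d'" "\<not> E b d'" "b \<noteq> d'"
    using path ab(1) c' d' x by auto
  obtain k where k: "\<not> reach_in E (V - S) k b" "\<forall>s\<in>S. \<exists>u. reach_in E (V - S) k u \<and> E s u"
    using minimal_separator_far_component[OF graph minimal_separator b(1)] by blast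
  have "x1 \<in> S" "x2 \<in> S"
    using x part_subset[OF X] by blast+
  then show ?thesis
    using induced_P6_via_far_component[OF graph S_subset b(1) c'(2) d'(2) b(2-5) \<open>x1 \<in> S\<close> \<open>x2 \<in> S\<close>
        x(3,4) _ _ _ _ part_independent[OF X x(1,2)] k(1)] x(1,2) c'(3) d'(3) k(2)
    by blast
qed

lemma induced_P6_of_unrepresented_cycle:
  assumes X: "X \<in> P" and unrep: "\<nexists>x. represents A X x"
    and nbrs: "\<forall>z\<in>A. E' (Inr X) z \<longrightarrow> z = p \<or> z = q"
    and cd: "c \<in> V'" "d \<in> V'" "c \<noteq> Inr X" "d \<noteq> Inr X" "\<not> E' (Inr X) c" "\<not> E' (Inr X) d"
    and path: "E' p c" "E' c d" "E' d q" "\<not> E' p d" "\<not> E' p q" "\<not> E' c q"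
  shows "\<exists>p. induced_P6 V E p"
proof -
  obtain a b where ab: "p = Inl a" "q = Inl b" "\<exists>x\<in>X. E x a" "\<exists>x\<in>X. E x b"
    "\<not> (\<exists>x\<in>X. E x a \<and> E x b)"
    using unrepresented_neighbours[OF X unrep nbrs] by blast
  obtain x1 x2 where x: "x1 \<in> X" "x2 \<in> X" "E x1 a" "E x2 b" "\<not> E x1 b" "\<not> E x2 a"
    using ab by blast
  obtain c' d' where c': "c = Inl c'" "c' \<in> V - S" "\<forall>x\<in>X. \<not> E x c'"
    and d': "d = Inl d'" "d' \<in> V - S" "\<forall>x\<in>X. \<not> E x d'"
    using contract_nonneighbour[OF cd(1,3,5) X] contract_nonneighbour[OF cd(2,4,6) X] by blast
  have ab_in: "a \<in> V - S" "b \<in> V - S"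
    using path ab(1,2) c' d' by auto
  have "x1 \<in> S" "x2 \<in> S"
    using x part_subset[OF X] by blast+
  then have "induced_P6 V E [x1, a, c', d', b, x2]"
    using x ab_in path ab(1,2) c' d' part_independent[OF X x(1,2)] S_subset graph_irrefl[OF graph]
    by (intro induced_P6I[OF graph]) (auto dest: graph_sym[OF graph])
  then show ?thesis ..
qed

lemma induced_P6_of_contracted_P6_front:
  assumes H: "induced_P6 V' E' [h0,h1,h2,h3,h4,h5]" and X: "Inr X \<in> {h0, h1, h2}"
    and unrep: "\<nexists>x. represents (set [h0,h1,h2,h3,h4,h5]) X x"
  shows "\<exists>p. induced_P6 V E p"
proof -
  note H' = H[unfolded induced_P6_iff]
  have XP: "X \<in> P"
    using X H' by auto
  from X consider "h0 = Inr X" | "h1 = Inr X" | "h2 = Inr X"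
    by blast
  then show ?thesis
  proof cases
    case 1
    \<comment> \<open>An end vertex has a single neighbour, so it cannot be unrepresented.\<close>
    then have "\<forall>z\<in>set [h0,h1,h2,h3,h4,h5]. E' (Inr X) z \<longrightarrow> z = h1 \<or> z = h1"
      using H' by auto
    then show ?thesis
      using unrepresented_neighbours[OF XP unrep] by blast
  next
    case 2
    then have "\<forall>z\<in>set [h0,h1,h2,h3,h4,h5]. E' (Inr X) z \<longrightarrow> z = h0 \<or> z = h2"
      using H' by auto
    then show ?thesis
      by (rule induced_P6_of_unrepresented_path[OF XP unrep, of h0 h2 h3 h4]) (use H' 2 in auto)
  next
    case 3
    then have "\<forall>z\<in>set [h0,h1,h2,h3,h4,h5]. E' (Inr X) z \<longrightarrow> z = h1 \<or> z = h3"
      using H' by auto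
    then show ?thesis
      by (rule induced_P6_of_unrepresented_path[OF XP unrep, of h1 h3 h4 h5]) (use H' 3 in auto)
  qed
qed

lemma induced_P6_of_contracted_P6:
  assumes H: "induced_P6 V' E' [h0,h1,h2,h3,h4,h5]" and X: "Inr X \<in> set [h0,h1,h2,h3,h4,h5]"
    and unrep: "\<nexists>x. represents (set [h0,h1,h2,h3,h4,h5]) X x"
  shows "\<exists>p. induced_P6 V E p"
proof (cases "Inr X \<in> {h0, h1, h2}")
  case True
  then show ?thesis
    using induced_P6_of_contracted_P6_front[OF H _ unrep] by blast
next
  case False
  then have "Inr X \<in> {h5, h4, h3}"
    using X by auto
  moreover have "set [h5,h4,h3,h2,h1,h0] = set [h0,h1,h2,h3,h4,h5]"
    by auto
  ultimately show ?thesis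
    using induced_P6_of_contracted_P6_front[OF induced_P6_rev[OF H]] unrep by simp
qed

lemma induced_P6_of_contracted_C5_head:
  assumes H: "induced_C5 V' E' [h0,h1,h2,h3,h4]" and X: "h0 = Inr X"
    and unrep: "\<nexists>x. represents (set [h0,h1,h2,h3,h4]) X x"
  shows "\<exists>p. induced_P6 V E p"
proof -
  note H' = H[unfolded induced_C5_iff]
  have XP: "X \<in> P"
    using X H' by auto
  have "\<forall>z\<in>set [h0,h1,h2,h3,h4]. E' (Inr X) z \<longrightarrow> z = h1 \<or> z = h4"
    using H' X by auto
  then show ?thesis
    by (rule induced_P6_of_unrepresented_cycle[OF XP unrep, of h1 h4 h2 h3]) (use H' X in auto)
qed

lemma induced_P6_of_contracted_C5:
  assumes H: "induced_C5 V' E' [h0,h1,h2,h3,h4]" and X: "Inr X \<in> set [h0,h1,h2,h3,h4]"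
    and unrep: "\<nexists>x. represents (set [h0,h1,h2,h3,h4]) X x"
  shows "\<exists>p. induced_P6 V E p"
proof -
  have H1: "induced_C5 V' E' [h1,h2,h3,h4,h0]" using induced_C5_rotate1[OF H] .
  have H2: "induced_C5 V' E' [h2,h3,h4,h0,h1]" using induced_C5_rotate1[OF H1] .
  have H3: "induced_C5 V' E' [h3,h4,h0,h1,h2]" using induced_C5_rotate1[OF H2] .
  have H4: "induced_C5 V' E' [h4,h0,h1,h2,h3]" using induced_C5_rotate1[OF H3] .
  have sets: "set [h1,h2,h3,h4,h0] = set [h0,h1,h2,h3,h4]" "set [h2,h3,h4,h0,h1] = set [h0,h1,h2,h3,h4]"
    "set [h3,h4,h0,h1,h2] = set [h0,h1,h2,h3,h4]" "set [h4,h0,h1,h2,h3] = set [h0,h1,h2,h3,h4]"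
    by auto
  from X consider "h0 = Inr X" | "h1 = Inr X" | "h2 = Inr X" | "h3 = Inr X" | "h4 = Inr X"
    by auto
  then show ?thesis
  proof cases
    case 1
    then show ?thesis using induced_P6_of_contracted_C5_head[OF H _ unrep] by blast
  next
    case 2
    then show ?thesis using induced_P6_of_contracted_C5_head[OF H1] unrep sets(1) by simp
  next
    case 3
    then show ?thesis using induced_P6_of_contracted_C5_head[OF H2] unrep sets(2) by simp
  next
    case 4
    then show ?thesis using induced_P6_of_contracted_C5_head[OF H3] unrep sets(3) by simp
  next
    case 5
    then show ?thesis using induced_P6_of_contracted_C5_head[OF H4] unrep sets(4) by simp
  qed
qed

lemma no_induced_P6_contract:
  assumes free: "P6_C5_free V E"
  shows "\<nexists>H. induced_P6 V' E' H"
proof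
  assume "\<exists>H. induced_P6 V' E' H"
  then obtain h0 h1 h2 h3 h4 h5 where H: "induced_P6 V' E' [h0,h1,h2,h3,h4,h5]"
    by (metis induced_P6_shape)
  let ?A = "set [h0,h1,h2,h3,h4,h5]"
  have "\<exists>p. induced_P6 V E p"
  proof (cases "\<forall>X. Inr X \<in> ?A \<longrightarrow> (\<exists>x. represents ?A X x)")
    case True
    have A: "?A \<subseteq> V'"
      using H unfolding induced_P6_def by (elim conjE)
    have "induced_P6 V E (map (lift ?A) [h0,h1,h2,h3,h4,h5])"
      using induced_P6_map[OF H lift_in_V[OF A True] inj_on_lift[OF A True]] lift_adjacent[OF A True]
      by blast
    then show ?thesis ..
  next
    case False
    then show ?thesis
      using induced_P6_of_contracted_P6[OF H] by blast
  qed
  then show False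
    using free unfolding P6_C5_free_def by blast
qed

lemma no_induced_C5_contract:
  assumes free: "P6_C5_free V E"
  shows "\<nexists>H. induced_C5 V' E' H"
proof
  assume "\<exists>H. induced_C5 V' E' H"
  then obtain h0 h1 h2 h3 h4 where H: "induced_C5 V' E' [h0,h1,h2,h3,h4]"
    by (metis induced_C5_shape)
  let ?A = "set [h0,h1,h2,h3,h4]"
  show False
  proof (cases "\<forall>X. Inr X \<in> ?A \<longrightarrow> (\<exists>x. represents ?A X x)")
    case True
    have A: "?A \<subseteq> V'"
      using H unfolding induced_C5_def by (elim conjE)
    have "induced_C5 V E (map (lift ?A) [h0,h1,h2,h3,h4])"
      using induced_C5_map[OF H lift_in_V[OF A True] inj_on_lift[OF A True]] lift_adjacent[OF A True]
      by blast
    then show False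
      using free unfolding P6_C5_free_def by blast
  next
    case False
    then have "\<exists>p. induced_P6 V E p"
      using induced_P6_of_contracted_C5[OF H] by blast
    then show False
      using free unfolding P6_C5_free_def by blast
  qed
qed

end

theorem lemma3:
  fixes V :: "'a set" and E :: "'a \<Rightarrow> 'a \<Rightarrow> bool" and S :: "'a set" and P :: "'a set set"
  assumes "graph V E"
    and "connected_graph V E"
    and "P6_C5_free V E"
    and "chromatic_cutset V E S"
    and "minimal_separator V E S"
    and "chromatic_partition V E S P"
  shows "P6_C5_free (contract_V V S P) (contract_E V E S P)"
proof -
  \<comment> \<open>Connectivity and the cutset property are already part of \<open>minimal_separator\<close>.\<close>
  interpret chromatic_contraction V E S P
    using assms(1,5,6) by unfold_locales
  show ?thesis
    using no_induced_P6_contract[OF assms(3)] no_induced_C5_contract[OF assms(3)]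
    unfolding P6_C5_free_def by blast
qed

end
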